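(* Let $X$ be a Banach space and $k\in\mathbb{N}$, and assume $X$ admits a $k$-spreading model equivalent to the usual basis of $\ell^1$. Then for every $\varepsilon>0$ there exists a $k$-sequence $(y_s)_{s\in[\mathbb{N}]^k}$ in $X$ with $1-\varepsilon\le\|y_s\|\le1$ for all $s$, which generates a $k$-spreading model $(\widetilde e_n)_n$ satisfying $\|\sum_{i=1}^n a_i\widetilde e_i\|\ge(1-\varepsilon)\sum_{i=1}^n|a_i|$ for all $n$ and all reals $a_1,\dots,a_n$.
   Context: $[M]^k$: $k$-subsets of $M\subseteq\mathbb{N}$ (increasing enumerations, $M(l)$ the $l$-th element of $M$). A $k$-sequence in $X$ is a map $[\mathbb{N}]^k\to X$. Plegma family: $(s_j)_{j=1}^l$ in $[M]^k$ with $s_1(i)<\dots<s_l(i)$ ($i\le k$) and $s_l(i)<s_1(i+1)$ ($i<k$). $(x_s)_{s\in[M]^k}$ generates the Hamel basis $(e_n)$ of a seminormed space $(E,\|\cdot\|_* )$ as a $k$-spreading model if for a null sequence $\delta_l>0$: $|\|\sum_{j=1}^m a_jx_{s_j}\|-\|\sum_{j=1}^m a_je_j\|_*|\le\delta_l$ for all $m\le l$, plegma $(s_j)_{j=1}^m$ in $[M]^k$ with $s_1(1)\ge M(l)$, $a_j\in[-1,1]$. $X$ admits $(e_n)$ as a $k$-spreading model if some $k$-sequence in $X$ and some infinite $M$ generate it. *)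

theory Defs
  imports "HOL-Analysis.Analysis" "HOL-Library.Infinite_Set"
begin

text \<open>A k-subset s of M, identified with its increasing enumeration.\<close>
definition kset :: "nat set \<Rightarrow> nat \<Rightarrow> nat set \<Rightarrow> bool" where
  "kset M k s \<longleftrightarrow> finite s \<and> s \<subseteq> M \<and> card s = k"

text \<open>s(i): the i-th element (1-indexed) of a finite set s of naturals.\<close>
definition el :: "nat set \<Rightarrow> nat \<Rightarrow> nat" where
  "el s i = sorted_list_of_set s ! (i - 1)"

text \<open>M(l): the l-th element (1-indexed) of an infinite set M.\<close>
definition elM :: "nat set \<Rightarrow> nat \<Rightarrow> nat" where
  "elM M l = enumerate M (l - 1)"

definition plegma :: "nat set \<Rightarrow> nat \<Rightarrow> nat set list \<Rightarrow> bool" where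
  "plegma M k ss \<longleftrightarrow> ss \<noteq> [] \<and> (\<forall>s\<in>set ss. kset M k s)
     \<and> (\<forall>i\<in>{1..k}. \<forall>j. Suc j < length ss \<longrightarrow> el (ss ! j) i < el (ss ! Suc j) i)
     \<and> (\<forall>i. 1 \<le> i \<and> i < k \<longrightarrow> el (last ss) i < el (hd ss) (Suc i))"

text \<open>A seminormed space with Hamel basis (e_n) is represented by the space c00 of finitely
  supported real sequences (e_n = n-th unit vector) with a seminorm N; N a = ||sum a_n e_n||_*.\<close>
definition fsupp :: "(nat \<Rightarrow> real) \<Rightarrow> bool" where
  "fsupp a \<longleftrightarrow> finite {n. a n \<noteq> 0}"

definition seminorm_c00 :: "((nat \<Rightarrow> real) \<Rightarrow> real) \<Rightarrow> bool" where
  "seminorm_c00 N \<longleftrightarrow>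
     (\<forall>a b. fsupp a \<longrightarrow> fsupp b \<longrightarrow> N (\<lambda>n. a n + b n) \<le> N a + N b)
   \<and> (\<forall>c a. fsupp a \<longrightarrow> N (\<lambda>n. c * a n) = \<bar>c\<bar> * N a)"

text \<open>Truncation: coefficient vector (a_1,...,a_m) padded by zeros (index j<m stands for j+1).\<close>
definition trunc :: "(nat \<Rightarrow> real) \<Rightarrow> nat \<Rightarrow> nat \<Rightarrow> real" where
  "trunc a m = (\<lambda>n. if n < m then a n else 0)"

definition generates_ksm ::
  "nat \<Rightarrow> (nat set \<Rightarrow> 'a::real_normed_vector) \<Rightarrow> nat set \<Rightarrow> ((nat \<Rightarrow> real) \<Rightarrow> real) \<Rightarrow> bool" where
  "generates_ksm k x M N \<longleftrightarrow> (\<exists>\<delta>::nat \<Rightarrow> real. (\<forall>l. \<delta> l > 0) \<and> \<delta> \<longlonglongrightarrow> 0 \<and>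
     (\<forall>l m ss a. 1 \<le> m \<and> m \<le> l \<and> length ss = m \<and> plegma M k ss \<and> el (hd ss) 1 \<ge> elM M l
        \<and> (\<forall>j. \<bar>a j\<bar> \<le> 1) \<longrightarrow>
        \<bar>norm (\<Sum>j<m. a j *\<^sub>R x (ss ! j)) - N (trunc a m)\<bar> \<le> \<delta> l))"

definition equiv_l1 :: "((nat \<Rightarrow> real) \<Rightarrow> real) \<Rightarrow> bool" where
  "equiv_l1 N \<longleftrightarrow> (\<exists>c C. 0 < c \<and> 0 < C \<and> (\<forall>n a.
      c * (\<Sum>i<n. \<bar>a i\<bar>) \<le> N (trunc a n) \<and> N (trunc a n) \<le> C * (\<Sum>i<n. \<bar>a i\<bar>)))"

end

theory Submission
  imports Defs
begin

text \<open>
  Proof idea (a James-type blocking argument). Let \<lambda> > 0 be the best constant with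
  \<lambda> \<Sum>|a_i| \<le> N(a) for the seminorm N of the given \<ell>1 spreading model, and pick a vector
  a = (a_0,...,a_{p-1}) of \<ell>1-norm 1 with N(a) = \<rho> < \<lambda>(1+\<eta>). Replace every k-set s by p
  interleaved copies block_set i s (i < p), obtained by spreading s out along the
  enumeration of M, and put y_s = (\<Sum>_i a_i x(block_set i s)) / (\<rho>(1+\<eta>)).
  A plegma family of n sets yields a plegma family of n*p block sets, so (y_s) generates the
  spreading model b \<mapsto> N(b \<otimes> a) / (\<rho>(1+\<eta>)) over UNIV, whose lower \<ell>1 constant is at least
  \<lambda>/(\<rho>(1+\<eta>)) \<ge> 1-\<epsilon>; shifting the blocks far out makes every single y_s have norm in [1-\<epsilon>, 1].
\<close>

lemma sorted_list_of_set_strict_mono_image: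
  assumes "strict_mono (h :: nat \<Rightarrow> nat)" "finite s"
  shows "sorted_list_of_set (h ` s) = map h (sorted_list_of_set s)"
proof (rule sorted_distinct_set_unique)
  have "sorted_wrt (<) (map h (sorted_list_of_set s))"
    unfolding sorted_wrt_map
    by (rule sorted_wrt_mono_rel[of _ "(<)"]) (use assms(1) in \<open>simp_all add: strict_mono_less\<close>)
  then show "sorted (map h (sorted_list_of_set s))" "distinct (map h (sorted_list_of_set s))"
    using strict_sorted_iff by blast+
qed (use assms(2) in auto)

lemma el_strict_mono_image:
  assumes "strict_mono (h :: nat \<Rightarrow> nat)" "finite s" "1 \<le> r" "r \<le> card s"
  shows "el (h ` s) r = h (el s r)"
  using assms by (simp add: el_def sorted_list_of_set_strict_mono_image)

lemma enumerate_atLeast: "enumerate {m :: nat..} n = m + n"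
proof (induction n arbitrary: m)
  case 0
  then show ?case by (simp add: enumerate_0 Least_equality)
next
  case (Suc n)
  have "enumerate {m..} 0 = m" by (simp add: enumerate_0 Least_equality)
  moreover have "{m..} - {m} = {Suc m..}" by auto
  ultimately show ?case using Suc by (simp add: enumerate_Suc')
qed

lemma elM_UNIV: "elM UNIV l = l - 1"
  using enumerate_atLeast[of 0 "l - 1"] by (simp add: elM_def atLeast_0)

lemma sum_div_mod:
  fixes g :: "nat \<Rightarrow> nat \<Rightarrow> 'b :: comm_monoid_add"
  assumes "p > 0"
  shows "(\<Sum>q<n * p. g (q div p) (q mod p)) = (\<Sum>j<n. \<Sum>i<p. g j i)"
proof -
  have "(\<Sum>q<n * p. g (q div p) (q mod p)) = (\<Sum>j<n. \<Sum>q\<in>{j * p..<j * p + p}. g (q div p) (q mod p))"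
    by (rule sum.nat_group[symmetric])
  also have "\<dots> = (\<Sum>j<n. \<Sum>i<p. g ((j * p + i) div p) ((j * p + i) mod p))"
    by (rule sum.cong[OF refl]) (simp add: sum.atLeastLessThan_shift_0 atLeast0LessThan add.commute)
  also have "\<dots> = (\<Sum>j<n. \<Sum>i<p. g j i)"
    using assms by (intro sum.cong refl) simp
  finally show ?thesis .
qed

text \<open>The i-th block copy (i < p) of a position v: the element p(v+m0+1)+i of the enumeration
  of M. The copies of v occupy p consecutive places of M, ordered by v first and i second.\<close>
definition block_index :: "nat set \<Rightarrow> nat \<Rightarrow> nat \<Rightarrow> nat \<Rightarrow> nat \<Rightarrow> nat" where
  "block_index M p m0 i v = enumerate M (p * (v + m0 + 1) + i)"

definition block_set :: "nat set \<Rightarrow> nat \<Rightarrow> nat \<Rightarrow> nat \<Rightarrow> nat set \<Rightarrow> nat set" where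
  "block_set M p m0 i s = block_index M p m0 i ` s"

definition block_family :: "nat set \<Rightarrow> nat \<Rightarrow> nat \<Rightarrow> nat set list \<Rightarrow> nat set list" where
  "block_family M p m0 ss = map (\<lambda>q. block_set M p m0 (q mod p) (ss ! (q div p))) [0..<length ss * p]"

lemma strict_mono_block_index:
  assumes "infinite M" "p \<ge> 1"
  shows "strict_mono (block_index M p m0 i)"
  by (rule strict_monoI) (use assms in \<open>simp add: block_index_def\<close>)

lemma kset_block_set:
  assumes "infinite M" "p \<ge> 1" "kset M' k s"
  shows "kset M k (block_set M p m0 i s)"
proof -
  have "inj (block_index M p m0 i)"
    using strict_mono_block_index[OF assms(1,2)] strict_mono_imp_inj_on by blast
  then have "card (block_index M p m0 i ` s) = card s"
    using card_image inj_on_subset by blast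
  then show ?thesis
    using assms unfolding kset_def block_set_def
    by (auto simp: block_index_def enumerate_in_set)
qed

lemma el_block_set:
  assumes "infinite M" "p \<ge> 1" "kset M' k s" "1 \<le> r" "r \<le> k"
  shows "el (block_set M p m0 i s) r = block_index M p m0 i (el s r)"
  using el_strict_mono_image[OF strict_mono_block_index[OF assms(1,2)]] assms
  unfolding block_set_def kset_def by auto

lemma length_block_family [simp]: "length (block_family M p m0 ss) = length ss * p"
  by (simp add: block_family_def)

lemma nth_block_family:
  "q < length ss * p \<Longrightarrow> block_family M p m0 ss ! q = block_set M p m0 (q mod p) (ss ! (q div p))"
  by (simp add: block_family_def)

lemma el_block_family:
  assumes "infinite M" "p \<ge> 1" "\<forall>s\<in>set ss. kset M' k s" "q < length ss * p" "1 \<le> r" "r \<le> k"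
  shows "el (block_family M p m0 ss ! q) r
       = enumerate M (p * (el (ss ! (q div p)) r + m0 + 1) + q mod p)"
proof -
  have "q div p < length ss" using assms(4) by (simp add: less_mult_imp_div_less)
  then have "kset M' k (ss ! (q div p))" using assms(3) by simp
  then show ?thesis
    using nth_block_family[OF assms(4)] el_block_set[OF assms(1,2) _ assms(5,6)]
    by (simp add: block_index_def)
qed

lemma block_position_less:
  fixes p u w r r' :: nat
  assumes "r < p" "u < w"
  shows "p * u + r < p * w + r'"
proof -
  have "p * u + r < p * (u + 1)" using assms(1) by simp
  also have "\<dots> \<le> p * w" using assms(2) by (intro mult_le_mono2) simp
  finally show ?thesis by simp
qed

lemma block_family_increasing:
  assumes M: "infinite M" and p: "p \<ge> 1" and ks: "\<forall>s\<in>set ss. kset M' k s"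
    and inc: "\<forall>i\<in>{1..k}. \<forall>j. Suc j < length ss \<longrightarrow> el (ss ! j) i < el (ss ! Suc j) i"
    and i: "i \<in> {1..k}" and q: "Suc q < length ss * p"
  shows "el (block_family M p m0 ss ! q) i < el (block_family M p m0 ss ! Suc q) i"
proof -
  let ?u = "\<lambda>q. el (ss ! (q div p)) i + m0 + 1"
  have "p * ?u q + q mod p < p * ?u (Suc q) + Suc q mod p"
  proof (cases "Suc (q mod p) = p")
    case True
    then have next_block: "Suc q div p = Suc (q div p)" by (simp add: div_Suc mod_Suc)
    have "Suc (q div p) < length ss"
      using q next_block by (metis less_mult_imp_div_less)
    then have "?u q < ?u (Suc q)" using inc i next_block by simp
    then show ?thesis using p by (intro block_position_less) simp
  next
    case False
    then show ?thesis by (simp add: mod_Suc div_Suc)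
  qed
  then show ?thesis
    using q i M by (simp add: el_block_family[OF M p ks])
qed

lemma block_family_interlaced:
  assumes M: "infinite M" and p: "p \<ge> 1" and ks: "\<forall>s\<in>set ss. kset M' k s"
    and ne: "ss \<noteq> []" and lh: "el (last ss) i < el (hd ss) (Suc i)"
    and i: "1 \<le> i" "i < k"
  shows "el (last (block_family M p m0 ss)) i < el (hd (block_family M p m0 ss)) (Suc i)"
proof -
  let ?n = "length ss" and ?T = "block_family M p m0 ss"
  have n: "?n \<ge> 1" using ne by (simp add: Suc_le_eq)
  have T: "?T \<noteq> []" using n p by (metis length_block_family length_0_conv mult_is_0 not_one_le_zero)
  obtain a b where ab: "?n = Suc a" "p = Suc b"
    using n p by (cases ?n; cases p) auto
  have last_idx: "?n * p - 1 = b + a * Suc b" using ab by simp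
  have "(b + a * Suc b) div Suc b = a + b div Suc b" by (rule div_mult_self1) simp
  moreover have "(b + a * Suc b) mod Suc b = b mod Suc b" by (rule mod_mult_self1)
  ultimately have dm: "(?n * p - 1) div p = ?n - 1" "(?n * p - 1) mod p = p - 1"
    unfolding last_idx using ab by simp_all
  have np: "?n * p - 1 < ?n * p" "0 < ?n * p" using n p by (simp_all add: Suc_le_eq)
  have "el (last ?T) i = enumerate M (p * (el (last ss) i + m0 + 1) + (p - 1))"
    using el_block_family[OF M p ks np(1)] i dm ne by (simp add: last_conv_nth T)
  moreover have "el (hd ?T) (Suc i) = enumerate M (p * (el (hd ss) (Suc i) + m0 + 1))"
    using el_block_family[OF M p ks np(2)] i ne by (simp add: hd_conv_nth T)
  moreover have "p * (el (last ss) i + m0 + 1) + (p - 1) < p * (el (hd ss) (Suc i) + m0 + 1) + 0"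
    using p lh by (intro block_position_less) auto
  ultimately show ?thesis using M by simp
qed

lemma plegma_block_family:
  assumes M: "infinite M" and p: "p \<ge> 1" and pl: "plegma M' k ss"
  shows "plegma M k (block_family M p m0 ss)"
proof -
  have ne: "ss \<noteq> []" and ks: "\<forall>s\<in>set ss. kset M' k s"
    using pl unfolding plegma_def by auto
  have "block_family M p m0 ss \<noteq> []"
    using ne p by (metis length_block_family length_0_conv mult_is_0 not_one_le_zero)
  moreover have "\<forall>s\<in>set (block_family M p m0 ss). kset M k s"
  proof
    fix s assume "s \<in> set (block_family M p m0 ss)"
    then obtain q where q: "q < length ss * p" "s = block_family M p m0 ss ! q"
      by (metis in_set_conv_nth length_block_family)
    then have "kset M' k (ss ! (q div p))"
      using ks by (simp add: less_mult_imp_div_less)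
    then show "kset M k s" using q by (simp add: nth_block_family kset_block_set[OF M p])
  qed
  ultimately show ?thesis
    using pl block_family_increasing[OF M p ks] block_family_interlaced[OF M p ks ne]
    unfolding plegma_def by auto
qed

definition spreading_bound ::
  "nat \<Rightarrow> (nat set \<Rightarrow> 'a::real_normed_vector) \<Rightarrow> nat set \<Rightarrow> ((nat \<Rightarrow> real) \<Rightarrow> real) \<Rightarrow> (nat \<Rightarrow> real) \<Rightarrow> bool"
  where "spreading_bound k x M N \<delta> \<longleftrightarrow>
    (\<forall>l m ss a. 1 \<le> m \<and> m \<le> l \<and> length ss = m \<and> plegma M k ss \<and> el (hd ss) 1 \<ge> elM M l
        \<and> (\<forall>j. \<bar>a j\<bar> \<le> 1) \<longrightarrow>
        \<bar>norm (\<Sum>j<m. a j *\<^sub>R x (ss ! j)) - N (trunc a m)\<bar> \<le> \<delta> l)"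

lemma generates_ksm_iff:
  "generates_ksm k x M N \<longleftrightarrow> (\<exists>\<delta>. (\<forall>l. \<delta> l > 0) \<and> \<delta> \<longlonglongrightarrow> 0 \<and> spreading_bound k x M N \<delta>)"
  unfolding generates_ksm_def spreading_bound_def ..

definition block_coeffs :: "nat \<Rightarrow> (nat \<Rightarrow> real) \<Rightarrow> (nat \<Rightarrow> real) \<Rightarrow> nat \<Rightarrow> real" where
  "block_coeffs p b a q = b (q div p) * a (q mod p)"

definition block_vector ::
  "(nat set \<Rightarrow> 'a::real_normed_vector) \<Rightarrow> nat set \<Rightarrow> nat \<Rightarrow> nat \<Rightarrow> (nat \<Rightarrow> real) \<Rightarrow> nat set \<Rightarrow> 'a"
  where "block_vector x M p m0 a s = (\<Sum>i<p. a i *\<^sub>R x (block_set M p m0 i s))"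

lemma sum_block_family:
  assumes "p > 0" "length ss = n"
  shows "(\<Sum>q<n * p. block_coeffs p b a q *\<^sub>R x (block_family M p m0 ss ! q))
       = (\<Sum>j<n. b j *\<^sub>R block_vector x M p m0 a (ss ! j))"
proof -
  have "(\<Sum>q<n * p. block_coeffs p b a q *\<^sub>R x (block_family M p m0 ss ! q))
      = (\<Sum>q<n * p. (\<lambda>j i. (b j * a i) *\<^sub>R x (block_set M p m0 i (ss ! j))) (q div p) (q mod p))"
    using assms(2) by (intro sum.cong refl) (simp add: nth_block_family block_coeffs_def)
  also have "\<dots> = (\<Sum>j<n. \<Sum>i<p. (b j * a i) *\<^sub>R x (block_set M p m0 i (ss ! j)))"
    by (rule sum_div_mod[OF assms(1)])
  finally show ?thesis by (simp add: block_vector_def scaleR_sum_right)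
qed

lemma block_estimate:
  fixes x :: "nat set \<Rightarrow> 'a::real_normed_vector"
  assumes bound: "spreading_bound k x M N \<delta>" and M: "infinite M" and p: "p \<ge> 1" and k: "k \<ge> 1"
    and a: "\<forall>i. \<bar>a i\<bar> \<le> 1" and b: "\<forall>j. \<bar>b j\<bar> \<le> 1"
    and pl: "plegma M' k ss" and n: "length ss = n" "n \<ge> 1"
    and L: "n * p \<le> L" "elM M L \<le> enumerate M (p * (el (hd ss) 1 + m0 + 1))"
  shows "\<bar>norm (\<Sum>j<n. b j *\<^sub>R block_vector x M p m0 a (ss ! j))
          - N (trunc (block_coeffs p b a) (n * p))\<bar> \<le> \<delta> L"
proof -
  let ?T = "block_family M p m0 ss"
  have ne: "ss \<noteq> []" using n by auto
  have ks: "\<forall>s\<in>set ss. kset M' k s" using pl unfolding plegma_def by auto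
  have np: "0 < n * p" using n p by simp
  have "?T \<noteq> []" using np n by (simp flip: length_greater_0_conv)
  then have "el (hd ?T) 1 = enumerate M (p * (el (hd ss) 1 + m0 + 1))"
    using el_block_family[OF M p ks, of 0 1 m0] k ne np n by (simp add: hd_conv_nth)
  moreover have "\<forall>q. \<bar>block_coeffs p b a q\<bar> \<le> 1"
    using a b by (simp add: block_coeffs_def abs_mult mult_le_one)
  ultimately have "\<bar>norm (\<Sum>q<n * p. block_coeffs p b a q *\<^sub>R x (?T ! q))
      - N (trunc (block_coeffs p b a) (n * p))\<bar> \<le> \<delta> L"
    using bound[unfolded spreading_bound_def, rule_format, of "n * p" L ?T "block_coeffs p b a"]
      np L plegma_block_family[OF M p pl] n by simp
  moreover have "(\<Sum>q<n * p. block_coeffs p b a q *\<^sub>R x (?T ! q))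
      = (\<Sum>j<n. b j *\<^sub>R block_vector x M p m0 a (ss ! j))"
    using p n by (intro sum_block_family) simp_all
  ultimately show ?thesis by simp
qed

lemma block_coeffs_trunc:
  assumes "p \<ge> 1"
  shows "block_coeffs p (trunc b n) a = trunc (block_coeffs p b a) (n * p)"
proof
  fix q
  have "(q div p < n) = (q < n * p)" using assms by (simp add: div_less_iff_less_mult)
  then show "block_coeffs p (trunc b n) a q = trunc (block_coeffs p b a) (n * p) q"
    by (simp add: block_coeffs_def trunc_def)
qed

lemma fsupp_block_coeffs:
  assumes "p \<ge> 1" "fsupp b"
  shows "fsupp (block_coeffs p b a)"
proof -
  obtain K where K: "{n. b n \<noteq> 0} \<subseteq> {..<K}"
    using assms(2) unfolding fsupp_def by (meson finite_nat_iff_bounded subsetI)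
  have "{q. block_coeffs p b a q \<noteq> 0} \<subseteq> {..<K * p}"
    using K assms(1) by (auto simp: block_coeffs_def div_less_iff_less_mult)
  then show ?thesis unfolding fsupp_def by (rule finite_subset) simp
qed

lemma seminorm_block:
  assumes N: "seminorm_c00 N" and p: "p \<ge> 1" and R: "R \<ge> 0"
  shows "seminorm_c00 (\<lambda>b. N (block_coeffs p b a) / R)"
  unfolding seminorm_c00_def
proof (intro conjI allI impI)
  fix b1 b2 :: "nat \<Rightarrow> real" assume "fsupp b1" "fsupp b2"
  then have "N (\<lambda>q. block_coeffs p b1 a q + block_coeffs p b2 a q)
      \<le> N (block_coeffs p b1 a) + N (block_coeffs p b2 a)"
    using N p fsupp_block_coeffs unfolding seminorm_c00_def by blast
  moreover have "block_coeffs p (\<lambda>n. b1 n + b2 n) a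
      = (\<lambda>q. block_coeffs p b1 a q + block_coeffs p b2 a q)"
    by (auto simp: block_coeffs_def algebra_simps)
  ultimately show "N (block_coeffs p (\<lambda>n. b1 n + b2 n) a) / R
      \<le> N (block_coeffs p b1 a) / R + N (block_coeffs p b2 a) / R"
    using R by (simp add: add_divide_distrib[symmetric] divide_right_mono)
next
  fix c :: real and b :: "nat \<Rightarrow> real" assume "fsupp b"
  then have "N (\<lambda>q. c * block_coeffs p b a q) = \<bar>c\<bar> * N (block_coeffs p b a)"
    using N p fsupp_block_coeffs unfolding seminorm_c00_def by blast
  moreover have "block_coeffs p (\<lambda>n. c * b n) a = (\<lambda>q. c * block_coeffs p b a q)"
    by (auto simp: block_coeffs_def)
  ultimately show "N (block_coeffs p (\<lambda>n. c * b n) a) / R = \<bar>c\<bar> * (N (block_coeffs p b a) / R)"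
    by simp
qed

text \<open>The shift m0 only delays the construction; it is what later makes every block vector,
  not just those far out, close to its limit norm.\<close>
lemma block_spreading_bound:
  fixes x :: "nat set \<Rightarrow> 'a::real_normed_vector"
  assumes bound: "spreading_bound k x M N \<delta>" and M: "infinite M" and p: "p \<ge> 1" and k: "k \<ge> 1"
    and a: "\<forall>i. \<bar>a i\<bar> \<le> 1" and R: "R > 0"
  shows "spreading_bound k (\<lambda>s. (1 / R) *\<^sub>R block_vector x M p m0 a s) UNIV
           (\<lambda>b. N (block_coeffs p b a) / R) (\<lambda>l. \<delta> (p * (l + m0) + 1) / R)"
  unfolding spreading_bound_def
proof (intro allI impI)
  fix l m :: nat and ss :: "nat set list" and b :: "nat \<Rightarrow> real"
  assume h: "1 \<le> m \<and> m \<le> l \<and> length ss = m \<and> plegma UNIV k ss \<and> elM UNIV l \<le> el (hd ss) 1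
      \<and> (\<forall>j. \<bar>b j\<bar> \<le> 1)"
  define L where "L = p * (l + m0) + 1"
  have "m * p \<le> L"
    using h mult_le_mono1[of m "l + m0" p] by (simp add: L_def algebra_simps)
  moreover have "elM M L \<le> enumerate M (p * (el (hd ss) 1 + m0 + 1))"
  proof -
    have "l - 1 \<le> el (hd ss) 1" using h by (simp add: elM_UNIV)
    then have "p * (l + m0) \<le> p * (el (hd ss) 1 + m0 + 1)"
      by (intro mult_le_mono2) linarith
    then show ?thesis using M by (simp add: L_def elM_def)
  qed
  ultimately have est: "\<bar>norm (\<Sum>j<m. b j *\<^sub>R block_vector x M p m0 a (ss ! j))
      - N (trunc (block_coeffs p b a) (m * p))\<bar> \<le> \<delta> L"
    using h by (intro block_estimate[OF bound M p k a]) auto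
  have "(\<Sum>j<m. b j *\<^sub>R (1 / R) *\<^sub>R block_vector x M p m0 a (ss ! j))
      = (1 / R) *\<^sub>R (\<Sum>j<m. b j *\<^sub>R block_vector x M p m0 a (ss ! j))"
    by (simp add: scaleR_sum_right)
  then have "\<bar>norm (\<Sum>j<m. b j *\<^sub>R (1 / R) *\<^sub>R block_vector x M p m0 a (ss ! j))
      - N (block_coeffs p (trunc b m) a) / R\<bar>
    = \<bar>norm (\<Sum>j<m. b j *\<^sub>R block_vector x M p m0 a (ss ! j))
      - N (trunc (block_coeffs p b a) (m * p))\<bar> / R"
    using R p by (simp add: block_coeffs_trunc diff_divide_distrib[symmetric])
  also have "\<dots> \<le> \<delta> L / R" using est R by (simp add: divide_right_mono)
  finally show "\<bar>norm (\<Sum>j<m. b j *\<^sub>R (1 / R) *\<^sub>R block_vector x M p m0 a (ss ! j))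
      - N (block_coeffs p (trunc b m) a) / R\<bar> \<le> \<delta> (p * (l + m0) + 1) / R"
    unfolding L_def .
qed

lemma block_generates:
  fixes x :: "nat set \<Rightarrow> 'a::real_normed_vector"
  assumes "generates_ksm k x M N" "infinite M" "p \<ge> 1" "k \<ge> 1" "\<forall>i. \<bar>a i\<bar> \<le> 1" "R > 0"
  shows "generates_ksm k (\<lambda>s. (1 / R) *\<^sub>R block_vector x M p m0 a s) UNIV
           (\<lambda>b. N (block_coeffs p b a) / R)"
proof -
  obtain \<delta> where \<delta>: "\<forall>l. \<delta> l > 0" "\<delta> \<longlonglongrightarrow> 0" "spreading_bound k x M N \<delta>"
    using assms(1) unfolding generates_ksm_iff by blast
  have "strict_mono (\<lambda>l. p * (l + m0) + 1)"
    using assms(3) by (intro strict_monoI) simp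
  then have "(\<lambda>l. \<delta> (p * (l + m0) + 1) / R) \<longlonglongrightarrow> 0"
    using LIMSEQ_subseq_LIMSEQ[OF \<delta>(2)] by (intro tendsto_divide_zero) (simp add: o_def)
  then show ?thesis
    unfolding generates_ksm_iff
    using \<delta>(1) assms(6) block_spreading_bound[OF \<delta>(3) assms(2-6)]
    by (intro exI[of _ "\<lambda>l. \<delta> (p * (l + m0) + 1) / R"]) auto
qed

lemma plegma_singleton:
  assumes "kset M k s"
  shows "plegma M k [s]"
proof -
  have sorted: "sorted_wrt (<) (sorted_list_of_set s)" by simp
  show ?thesis
    using assms unfolding plegma_def kset_def
    by (auto simp: el_def intro!: sorted_wrt_nth_less[OF sorted])
qed

lemma block_vector_norm:
  fixes x :: "nat set \<Rightarrow> 'a::real_normed_vector"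
  assumes bound: "spreading_bound k x M N \<delta>" and M: "infinite M" and p: "p \<ge> 1" and k: "k \<ge> 1"
    and a: "\<forall>i. \<bar>a i\<bar> \<le> 1" and s: "kset M' k s"
  shows "\<bar>norm (block_vector x M p m0 a s) - N (trunc a p)\<bar> \<le> \<delta> (p * (m0 + 1))"
proof -
  have "p * (m0 + 1) \<le> p * (el s 1 + m0 + 1)"
    by (intro mult_le_mono2) simp
  then have "p * (m0 + 1) - 1 \<le> p * (el s 1 + m0 + 1)" by linarith
  then have "elM M (p * (m0 + 1)) \<le> enumerate M (p * (el (hd [s]) 1 + m0 + 1))"
    using M by (simp add: elM_def)
  then have "\<bar>norm (\<Sum>j<1. (\<lambda>_. 1) j *\<^sub>R block_vector x M p m0 a ([s] ! j))
      - N (trunc (block_coeffs p (\<lambda>_. 1) a) (1 * p))\<bar> \<le> \<delta> (p * (m0 + 1))"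
    by (intro block_estimate[OF bound M p k a _ plegma_singleton[OF s]]) auto
  moreover have "trunc (block_coeffs p (\<lambda>_. 1) a) p = trunc a p"
    by (auto simp: trunc_def block_coeffs_def)
  ultimately show ?thesis by simp
qed

lemma trunc_scale: "trunc (\<lambda>i. c * a i) m = (\<lambda>n. c * trunc a m n)"
  by (auto simp: trunc_def)

lemma fsupp_trunc: "fsupp (trunc a m)"
  unfolding fsupp_def trunc_def by (rule finite_subset[of _ "{..<m}"]) auto

text \<open>By homogeneity, a lower \<ell>1 estimate for a seminorm only needs to be checked on
  coefficient vectors of \<ell>1-norm 1.\<close>
lemma l1_lower_bound_from_unit_vectors:
  assumes N: "seminorm_c00 N" and unit: "\<And>a m. (\<Sum>i<m. \<bar>a i\<bar>) = 1 \<Longrightarrow> lam \<le> N (trunc a m)"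
  shows "lam * (\<Sum>i<m. \<bar>a i\<bar>) \<le> N (trunc a m)"
proof (cases "(\<Sum>i<m. \<bar>a i\<bar>) = 0")
  case True
  then have "trunc a m = (\<lambda>n. 0 * trunc a m n)"
    by (auto simp: trunc_def sum_nonneg_eq_0_iff)
  then have "N (trunc a m) = 0"
    using N fsupp_trunc unfolding seminorm_c00_def by (metis abs_zero mult_zero_left)
  then show ?thesis using True by simp
next
  case False
  define \<sigma> where "\<sigma> = (\<Sum>i<m. \<bar>a i\<bar>)"
  have \<sigma>: "\<sigma> > 0" using False unfolding \<sigma>_def by (simp add: order_le_neq_trans sum_nonneg)
  have "(\<Sum>i<m. \<bar>a i / \<sigma>\<bar>) = 1"
    using \<sigma> by (simp add: sum_divide_distrib[symmetric] \<sigma>_def)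
  then have "lam \<le> N (trunc (\<lambda>i. a i / \<sigma>) m)" by (rule unit)
  moreover have "N (trunc a m) = \<sigma> * N (trunc (\<lambda>i. a i / \<sigma>) m)"
    using N \<sigma> trunc_scale[of \<sigma> "\<lambda>i. a i / \<sigma>" m] fsupp_trunc
    unfolding seminorm_c00_def by simp
  ultimately show ?thesis using \<sigma> mult_left_mono unfolding \<sigma>_def[symmetric] by (simp add: mult.commute)
qed

definition l1_constant :: "((nat \<Rightarrow> real) \<Rightarrow> real) \<Rightarrow> real" where
  "l1_constant N = Inf {N (trunc a m) | a m. (\<Sum>i<m. \<bar>a i\<bar>) = 1}"

lemma l1_constant:
  assumes N: "seminorm_c00 N" and l1: "equiv_l1 N"
  shows "l1_constant N > 0"
    and "\<And>a m. l1_constant N * (\<Sum>i<m. \<bar>a i\<bar>) \<le> N (trunc a m)"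
    and "\<And>\<mu>. \<mu> > l1_constant N \<Longrightarrow>
           \<exists>a m. 1 \<le> m \<and> (\<forall>i. \<bar>a i\<bar> \<le> 1) \<and> (\<Sum>i<m. \<bar>a i\<bar>) = 1 \<and> N (trunc a m) < \<mu>"
proof -
  define S where "S = {N (trunc a m) | a m. (\<Sum>i<m. \<bar>a i\<bar>) = 1}"
  obtain c where c: "c > 0" "\<And>a m. c * (\<Sum>i<m. \<bar>a i\<bar>) \<le> N (trunc a m)"
    using l1 unfolding equiv_l1_def by blast
  have "N (trunc (\<lambda>_. 1) 1) \<in> S" unfolding S_def by force
  then have S: "S \<noteq> {}" by blast
  have c_le: "c \<le> v" if "v \<in> S" for v
  proof -
    obtain a m where "v = N (trunc a m)" "(\<Sum>i<m. \<bar>a i\<bar>) = 1"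
      using \<open>v \<in> S\<close> unfolding S_def by blast
    then show ?thesis using c(2)[of a m] by simp
  qed
  then show "l1_constant N > 0"
    using c(1) cInf_greatest[OF S] unfolding l1_constant_def S_def[symmetric] by force
  have bdd: "bdd_below S" using c_le by (rule bdd_belowI)
  have "l1_constant N \<le> N (trunc a m)" if "(\<Sum>i<m. \<bar>a i\<bar>) = 1" for a m
    unfolding l1_constant_def S_def[symmetric]
    by (rule cInf_lower[OF _ bdd]) (use that in \<open>auto simp: S_def\<close>)
  then show "l1_constant N * (\<Sum>i<m. \<bar>a i\<bar>) \<le> N (trunc a m)" for a m
    by (rule l1_lower_bound_from_unit_vectors[OF N])
  show "\<exists>a m. 1 \<le> m \<and> (\<forall>i. \<bar>a i\<bar> \<le> 1) \<and> (\<Sum>i<m. \<bar>a i\<bar>) = 1 \<and> N (trunc a m) < \<mu>"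
    if \<mu>: "\<mu> > l1_constant N" for \<mu>
  proof -
    obtain a m where a: "(\<Sum>i<m. \<bar>a i\<bar>) = 1" "N (trunc a m) < \<mu>"
      using cInf_lessD[OF S, of \<mu>] \<mu> unfolding l1_constant_def S_def by blast
    have "\<bar>trunc a m i\<bar> \<le> 1" for i
      using member_le_sum[of i "{..<m}" "\<lambda>i. \<bar>a i\<bar>"] a(1) by (simp add: trunc_def)
    moreover have "m \<ge> 1" using a(1) by (cases m) auto
    moreover have "trunc (trunc a m) m = trunc a m" by (auto simp: trunc_def)
    ultimately show ?thesis using a by (intro exI[of _ "trunc a m"] exI[of _ m]) (simp add: trunc_def)
  qed
qed

lemma l1_sum_block_coeffs:
  assumes "p > 0"
  shows "(\<Sum>q<n * p. \<bar>block_coeffs p b a q\<bar>) = (\<Sum>j<n. \<bar>b j\<bar>) * (\<Sum>i<p. \<bar>a i\<bar>)"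
  using sum_div_mod[OF assms, of "\<lambda>j i. \<bar>b j\<bar> * \<bar>a i\<bar>" n]
  by (simp add: block_coeffs_def abs_mult sum_product)

text \<open>The error budget: with 2\<eta> \<le> \<epsilon> and \<rho> < \<lambda>(1+\<eta>), normalising by R = \<rho>(1+\<eta>) loses
  at most a factor 1-\<epsilon>, both on norms within \<eta>\<rho> of \<rho> and on the lower l1 constant \<lambda>.\<close>
lemma renormalisation_margin:
  fixes \<epsilon> \<eta> lam \<rho> :: real
  assumes "0 \<le> \<eta>" "\<eta> \<le> 1" "2 * \<eta> \<le> \<epsilon>" "0 \<le> \<rho>" "\<rho> < lam * (1 + \<eta>)"
  shows "(1 - \<epsilon>) * (\<rho> * (1 + \<eta>)) \<le> \<rho> * (1 - \<eta>)"
    and "(1 - \<epsilon>) * (\<rho> * (1 + \<eta>)) \<le> lam"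
proof -
  have "(1 - \<epsilon>) * (1 + \<eta>) \<le> 1 - \<eta>"
  proof -
    have "0 \<le> \<epsilon> * \<eta>" using assms(1,3) by simp
    then show ?thesis using assms(3) by (simp add: algebra_simps)
  qed
  then show first: "(1 - \<epsilon>) * (\<rho> * (1 + \<eta>)) \<le> \<rho> * (1 - \<eta>)"
    using mult_left_mono[OF _ assms(4)] by (metis mult.assoc mult.commute)
  have "\<rho> * (1 - \<eta>) \<le> lam * (1 + \<eta>) * (1 - \<eta>)"
    using assms(2,5) by (intro mult_right_mono) simp_all
  also have "\<dots> \<le> lam"
  proof -
    have "0 < lam * (1 + \<eta>)" using assms(4,5) by linarith
    then have "0 < lam" using assms(1) by (simp add: zero_less_mult_iff)
    then show ?thesis using assms(1) by (simp add: algebra_simps)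
  qed
  finally show "(1 - \<epsilon>) * (\<rho> * (1 + \<eta>)) \<le> lam" using first by linarith
qed

lemma normalised_norm_bounds:
  fixes t \<epsilon> \<eta> \<rho> :: real
  assumes "\<bar>t - \<rho>\<bar> \<le> \<eta> * \<rho>" "(1 - \<epsilon>) * (\<rho> * (1 + \<eta>)) \<le> \<rho> * (1 - \<eta>)" "\<rho> * (1 + \<eta>) > 0"
  shows "1 - \<epsilon> \<le> t / (\<rho> * (1 + \<eta>))" "t / (\<rho> * (1 + \<eta>)) \<le> 1"
proof -
  have "(1 - \<epsilon>) * (\<rho> * (1 + \<eta>)) \<le> t" using assms(1,2) by (simp add: algebra_simps)
  then show "1 - \<epsilon> \<le> t / (\<rho> * (1 + \<eta>))" using assms(3) by (simp add: pos_le_divide_eq)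
  show "t / (\<rho> * (1 + \<eta>)) \<le> 1" using assms(1,3) by (simp add: algebra_simps)
qed

lemma almost_isometric_block_sequence:
  fixes x :: "nat set \<Rightarrow> 'a::real_normed_vector" and lam \<epsilon> \<eta> :: real
  assumes M: "infinite M" and k: "k \<ge> 1" and N: "seminorm_c00 N" and gen: "generates_ksm k x M N"
    and lower: "\<And>b m. lam * (\<Sum>i<m. \<bar>b i\<bar>) \<le> N (trunc b m)" and lam: "lam > 0"
    and p: "p \<ge> 1" and a: "\<forall>i. \<bar>a i\<bar> \<le> 1" "(\<Sum>i<p. \<bar>a i\<bar>) = 1" "N (trunc a p) < lam * (1 + \<eta>)"
    and \<eta>: "0 < \<eta>" "\<eta> \<le> 1" "2 * \<eta> \<le> \<epsilon>"
  shows "\<exists>y :: nat set \<Rightarrow> 'a.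
           (\<forall>s. kset UNIV k s \<longrightarrow> 1 - \<epsilon> \<le> norm (y s) \<and> norm (y s) \<le> 1)
         \<and> (\<exists>M N. infinite M \<and> seminorm_c00 N \<and> generates_ksm k y M N
              \<and> (\<forall>n a. N (trunc a n) \<ge> (1 - \<epsilon>) * (\<Sum>i<n. \<bar>a i\<bar>)))"
proof -
  define \<rho> where "\<rho> = N (trunc a p)"
  define R where "R = \<rho> * (1 + \<eta>)"
  have \<rho>: "\<rho> > 0" using lower[of a p] a(2) lam unfolding \<rho>_def by simp
  then have R: "R > 0" using \<eta> unfolding R_def by simp
  note margin = renormalisation_margin[OF less_imp_le[OF \<eta>(1)] \<eta>(2,3) less_imp_le[OF \<rho>]
      a(3)[folded \<rho>_def]]
  obtain \<delta> where \<delta>: "\<delta> \<longlonglongrightarrow> 0" "spreading_bound k x M N \<delta>"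
    using gen unfolding generates_ksm_iff by blast
  obtain m0 where m0: "\<And>L. L \<ge> m0 \<Longrightarrow> \<delta> L \<le> \<eta> * \<rho>"
    using order_tendstoD(2)[OF \<delta>(1), of "\<eta> * \<rho>"] \<eta>(1) \<rho>
    unfolding eventually_sequentially by (meson less_imp_le mult_pos_pos)
  define y where "y = (\<lambda>s. (1 / R) *\<^sub>R block_vector x M p m0 a s)"
  have "1 - \<epsilon> \<le> norm (y s) \<and> norm (y s) \<le> 1" if s: "kset UNIV k s" for s
  proof -
    have "m0 \<le> p * (m0 + 1)" using p by (metis le_add1 mult_1 mult_le_mono1 order_trans)
    then have "\<bar>norm (block_vector x M p m0 a s) - \<rho>\<bar> \<le> \<eta> * \<rho>"
      using block_vector_norm[OF \<delta>(2) M p k a(1) s, of m0] m0 unfolding \<rho>_def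
      by (meson order_trans)
    moreover have "norm (y s) = norm (block_vector x M p m0 a s) / R"
      using R by (simp add: y_def)
    ultimately show ?thesis
      using normalised_norm_bounds[OF _ margin(1)] R unfolding R_def by simp
  qed
  moreover have "(1 - \<epsilon>) * (\<Sum>i<n. \<bar>b i\<bar>) \<le> N (block_coeffs p (trunc b n) a) / R" for n b
  proof -
    have "lam * (\<Sum>i<n. \<bar>b i\<bar>) \<le> N (block_coeffs p (trunc b n) a)"
      using lower[of "block_coeffs p b a" "n * p"] l1_sum_block_coeffs[where n = n and b = b and a = a] a(2) p
      by (simp add: block_coeffs_trunc)
    moreover have "(1 - \<epsilon>) * R * (\<Sum>i<n. \<bar>b i\<bar>) \<le> lam * (\<Sum>i<n. \<bar>b i\<bar>)"
      using margin(2) unfolding R_def by (intro mult_right_mono) (simp_all add: sum_nonneg)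
    ultimately have "(1 - \<epsilon>) * (\<Sum>i<n. \<bar>b i\<bar>) * R \<le> N (block_coeffs p (trunc b n) a)"
      by (simp add: mult_ac)
    then show ?thesis using R by (simp add: pos_le_divide_eq)
  qed
  moreover have "seminorm_c00 (\<lambda>b. N (block_coeffs p b a) / R)"
    using seminorm_block[OF N p] R by simp
  ultimately show ?thesis
    using block_generates[OF gen M p k a(1) R, of m0] unfolding y_def[symmetric]
    by (intro exI[of _ y] conjI exI[of _ UNIV] exI[of _ "\<lambda>b. N (block_coeffs p b a) / R"]) auto
qed

lemma l1_spreading_model_almost_isometric:
  fixes x :: "nat set \<Rightarrow> 'a::real_normed_vector" and \<epsilon> :: real
  assumes k: "k \<ge> 1" and M: "infinite M" and N: "seminorm_c00 N" and gen: "generates_ksm k x M N"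
    and l1: "equiv_l1 N" and \<epsilon>: "\<epsilon> > 0"
  shows "\<exists>y :: nat set \<Rightarrow> 'a.
           (\<forall>s. kset UNIV k s \<longrightarrow> 1 - \<epsilon> \<le> norm (y s) \<and> norm (y s) \<le> 1)
         \<and> (\<exists>M N. infinite M \<and> seminorm_c00 N \<and> generates_ksm k y M N
              \<and> (\<forall>n a. N (trunc a n) \<ge> (1 - \<epsilon>) * (\<Sum>i<n. \<bar>a i\<bar>)))"
proof -
  define \<eta> where "\<eta> = min 1 \<epsilon> / 2"
  have \<eta>: "0 < \<eta>" "\<eta> \<le> 1" "2 * \<eta> \<le> \<epsilon>" using \<epsilon> unfolding \<eta>_def by auto
  have "l1_constant N * (1 + \<eta>) > l1_constant N" using l1_constant(1)[OF N l1] \<eta>(1) by simp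
  then obtain a p where "1 \<le> p" "\<forall>i. \<bar>a i\<bar> \<le> 1" "(\<Sum>i<p. \<bar>a i\<bar>) = 1"
      "N (trunc a p) < l1_constant N * (1 + \<eta>)"
    using l1_constant(3)[OF N l1] by blast
  then show ?thesis
    using almost_isometric_block_sequence[OF M k N gen l1_constant(2)[OF N l1]
        l1_constant(1)[OF N l1] _ _ _ _ \<eta>] by blast
qed

theorem mainTheorem10:
  fixes k :: nat
  assumes "k \<ge> 1"
    and "\<exists>(x :: nat set \<Rightarrow> 'a::banach) M N. infinite M \<and> seminorm_c00 N
           \<and> generates_ksm k x M N \<and> equiv_l1 N"
  shows "\<forall>\<epsilon>>0. \<exists>y :: nat set \<Rightarrow> 'a.
           (\<forall>s. kset UNIV k s \<longrightarrow> 1 - \<epsilon> \<le> norm (y s) \<and> norm (y s) \<le> 1)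
         \<and> (\<exists>M N. infinite M \<and> seminorm_c00 N \<and> generates_ksm k y M N
              \<and> (\<forall>n a. N (trunc a n) \<ge> (1 - \<epsilon>) * (\<Sum>i<n. \<bar>a i\<bar>)))"
  using assms l1_spreading_model_almost_isometric by blast

end
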